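(* The class of subgraphs of the square grid is $(6,1)$-disjointness-expressing.
   Context: The square grid is the infinite graph with vertex set $\mathbb{Z}^2$ in which two points are adjacent iff their Euclidean distance is 1; a subgraph of the square grid means a finite graph isomorphic to a subgraph of it. A class $\mathcal{C}$ of graphs is $(s,\kappa)$-disjointness-expressing if for some constant $\alpha>0$, for every positive integer $N$ and every $X\subseteq\{1,\dots,N\}$ one can define graphs $L(X)$ and $R(X)$, each containing a labelled set $S$ of special vertices, such that for all $A,B\subseteq\{1,\dots,N\}$: (i) the graph $g(L(A),R(B))$ obtained by identifying each vertex of $S$ in $L(A)$ with the corresponding vertex of $S$ in $R(B)$ is connected and has at most $\alpha N^{1/\kappa}$ vertices; (ii) the subgraph of $g(L(A),R(B))$ induced by the closed neighborhood $N[S]$ is independent of $A,B$ (for all $A,A',B,B'$ there is an isomorphism between these induced subgraphs that is the identity on $S$) and has at most $s$ vertices; (iii) $g(L(A),R(B))\in\mathcal{C}$ if and only if $A\cap B=\emptyset$. *)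

theory Defs
  imports Complex_Main
begin

record 'a graph =
  verts :: "'a set"
  edges :: "'a set set"

definition wf_graph :: "'a graph \<Rightarrow> bool" where
  "wf_graph G \<longleftrightarrow> finite (verts G) \<and>
     (\<forall>e\<in>edges G. \<exists>u v. u \<noteq> v \<and> e = {u, v} \<and> u \<in> verts G \<and> v \<in> verts G)"

definition connected_graph :: "'a graph \<Rightarrow> bool" where
  "connected_graph G \<longleftrightarrow> verts G \<noteq> {} \<and>
     (\<forall>u\<in>verts G. \<forall>v\<in>verts G.
        (\<lambda>x y. x \<in> verts G \<and> y \<in> verts G \<and> {x, y} \<in> edges G)\<^sup>*\<^sup>* u v)"

definition grid_adj :: "int \<times> int \<Rightarrow> int \<times> int \<Rightarrow> bool" where
  "grid_adj p q \<longleftrightarrow> (fst p - fst q)^2 + (snd p - snd q)^2 = 1"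

definition grid_subgraph :: "'a graph \<Rightarrow> bool" where
  "grid_subgraph G \<longleftrightarrow> wf_graph G \<and>
     (\<exists>f :: 'a \<Rightarrow> int \<times> int. inj_on f (verts G) \<and>
        (\<forall>u\<in>verts G. \<forall>v\<in>verts G. {u, v} \<in> edges G \<longrightarrow> grid_adj (f u) (f v)))"

definition induced :: "'a graph \<Rightarrow> 'a set \<Rightarrow> 'a graph" where
  "induced G W = \<lparr>verts = W \<inter> verts G, edges = {e \<in> edges G. e \<subseteq> W}\<rparr>"

definition closed_nbhd :: "'a graph \<Rightarrow> 'a set \<Rightarrow> 'a set" where
  "closed_nbhd G S = (S \<inter> verts G) \<union> {v \<in> verts G. \<exists>u\<in>S. {u, v} \<in> edges G}"

definition iso_fixing :: "'a set \<Rightarrow> 'a graph \<Rightarrow> 'a graph \<Rightarrow> bool" where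
  "iso_fixing S G H \<longleftrightarrow> (\<exists>f. bij_betw f (verts G) (verts H) \<and>
     (\<forall>u\<in>verts G. \<forall>v\<in>verts G. {u, v} \<in> edges G \<longleftrightarrow> {f u, f v} \<in> edges H) \<and>
     (\<forall>x\<in>S. f x = x))"

text \<open>Gluing g(L,R): disjoint union of L and R in which each special vertex
  x \<in> S of R is identified with the special vertex x of L.\<close>
definition glue_map :: "'a set \<Rightarrow> 'a \<Rightarrow> 'a + 'a" where
  "glue_map S v = (if v \<in> S then Inl v else Inr v)"

definition glue :: "'a set \<Rightarrow> 'a graph \<Rightarrow> 'a graph \<Rightarrow> ('a + 'a) graph" where
  "glue S L R =
     \<lparr>verts = Inl ` verts L \<union> glue_map S ` verts R,
      edges = (image Inl) ` edges L \<union> (image (glue_map S)) ` edges R\<rparr>"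

text \<open>(s,\<kappa>)-disjointness-expressing classes.  Special vertices are given by a
  finite set S of (nat) vertex names present in every L(X) and R(X).\<close>
definition disjointness_expressing ::
  "((nat + nat) graph \<Rightarrow> bool) \<Rightarrow> nat \<Rightarrow> nat \<Rightarrow> bool" where
  "disjointness_expressing C s \<kappa> \<longleftrightarrow>
     (\<exists>\<alpha>::real. \<alpha> > 0 \<and>
       (\<forall>N::nat. N \<ge> 1 \<longrightarrow>
         (\<exists>(S :: nat set) (L :: nat set \<Rightarrow> nat graph) (R :: nat set \<Rightarrow> nat graph).
            finite S \<and>
            (\<forall>X. X \<subseteq> {1..N} \<longrightarrow> wf_graph (L X) \<and> wf_graph (R X) \<and>
                   S \<subseteq> verts (L X) \<and> S \<subseteq> verts (R X)) \<and>
            (\<forall>A B. A \<subseteq> {1..N} \<longrightarrow> B \<subseteq> {1..N} \<longrightarrow>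
               connected_graph (glue S (L A) (R B)) \<and>
               real (card (verts (glue S (L A) (R B)))) \<le> \<alpha> * real N powr (1 / real \<kappa>) \<and>
               card (closed_nbhd (glue S (L A) (R B)) (Inl ` S)) \<le> s \<and>
               (C (glue S (L A) (R B)) \<longleftrightarrow> A \<inter> B = {})) \<and>
            (\<forall>A B A' B'. A \<subseteq> {1..N} \<longrightarrow> B \<subseteq> {1..N} \<longrightarrow>
                         A' \<subseteq> {1..N} \<longrightarrow> B' \<subseteq> {1..N} \<longrightarrow>
               iso_fixing (Inl ` S)
                 (induced (glue S (L A) (R B)) (closed_nbhd (glue S (L A) (R B)) (Inl ` S)))
                 (induced (glue S (L A') (R B')) (closed_nbhd (glue S (L A') (R B')) (Inl ` S)))))))"

end

theory Submission
  imports Defs "HOL-Library.Product_Plus" "HOL-Library.Countable"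
begin

text \<open>
  \<open>L(X)\<close> is a comb: a ladder with rails in the columns \<open>-2, -1\<close> and rows \<open>0..M\<close>,
  the two special points \<open>(0, 0), (0, 1)\<close>, and a tooth \<open>(0, i + 2)\<close> for every \<open>i \<in> X\<close>;
  \<open>R(X)\<close> is its mirror image, and the two are glued along the special points.
  If \<open>A \<inter> B = {}\<close> the teeth of the two halves occupy different points, so the coordinates
  themselves embed the glued graph into the grid. Conversely, a grid embedding maps every
  4-cycle with distinct diagonals onto a unit square, so ladders are embedded rigidly.
  The \<open>2 \<times> 5\<close> ladder formed by the bottom two rows of both halves then forces the images
  of the two inner rails to be parallel, two steps apart. A tooth at height \<open>i + 2\<close> of either
  half has only one free place, the grid point between the inner rails, so for
  \<open>i \<in> A \<inter> B\<close> the two teeth collide. The closed neighbourhood of the special vertices is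
  always the same \<open>2 \<times> 3\<close> block, and the glued graph has \<open>O(N)\<close> vertices.
\<close>

section \<open>Directions and unit squares in the grid\<close>

type_synonym point = "int \<times> int"

definition grid_dirs :: "point set" where
  "grid_dirs = {(1, 0), (-1, 0), (0, 1), (0, -1)}"

lemma uminus_grid_dirs: "a \<in> grid_dirs \<Longrightarrow> - a \<in> grid_dirs"
  by (auto simp: grid_dirs_def)

lemma grid_adj_iff: "grid_adj p q \<longleftrightarrow> q - p \<in> grid_dirs"
proof -
  obtain a b c d where pq: "p = (a, b)" "q = (c, d)" by (cases p, cases q) auto
  have "(a - c)\<^sup>2 + (b - d)\<^sup>2 = 1 \<longleftrightarrow> (c - a, d - b) \<in> grid_dirs"
  proof
    assume h: "(a - c)\<^sup>2 + (b - d)\<^sup>2 = 1"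
    then have "(a - c)\<^sup>2 \<le> 1" "(b - d)\<^sup>2 \<le> 1"
      using zero_le_power2[of "a - c"] zero_le_power2[of "b - d"] by linarith+
    then have "\<bar>a - c\<bar> \<le> 1" "\<bar>b - d\<bar> \<le> 1"
      by (metis abs_le_square_iff abs_one one_power2)+
    then have "a - c \<in> {-1, 0, 1}" "b - d \<in> {-1, 0, 1}" by auto
    then show "(c - a, d - b) \<in> grid_dirs" using h by (auto simp: grid_dirs_def power2_eq_square)
  qed (auto simp: grid_dirs_def power2_eq_square algebra_simps)
  then show ?thesis using pq by (simp add: grid_adj_def)
qed

lemma grid_adj_Pair: "grid_adj (a, b) (c, d) \<longleftrightarrow> (a - c)\<^sup>2 + (b - d)\<^sup>2 = 1"
  by (simp add: grid_adj_def)

lemma grid_adj_sym: "grid_adj p q \<Longrightarrow> grid_adj q p"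
  by (simp add: grid_adj_def power2_commute)

lemma grid_adj_irrefl: "grid_adj p p \<Longrightarrow> False"
  by (simp add: grid_adj_def)

lemma grid_dirs_four_cycle:
  assumes "a \<in> grid_dirs" "b \<in> grid_dirs" "c \<in> grid_dirs" "d \<in> grid_dirs"
    and "a + b + c + d = 0" "a + b \<noteq> 0" "b + c \<noteq> 0"
  shows "c = - a \<and> d \<noteq> a \<and> d \<noteq> - a"
  using assms unfolding grid_dirs_def
  by (simp only: insert_iff empty_iff simp_thms) (elim disjE; simp add: zero_prod_def)

lemma grid_dirs_third:
  assumes "a \<in> grid_dirs" "b \<in> grid_dirs" "c \<in> grid_dirs"
    and "b \<noteq> a" "b \<noteq> - a" "c \<noteq> b" "c \<noteq> - b" "c \<noteq> - a"
  shows "c = a"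
  using assms unfolding grid_dirs_def
  by (simp only: insert_iff empty_iff simp_thms) (elim disjE; simp)

lemma grid_adj_remaining_dir:
  assumes "grid_adj p q" "a \<in> grid_dirs" "b \<in> grid_dirs" "b \<noteq> a" "b \<noteq> - a"
    and "q \<noteq> p - a" "q \<noteq> p + b" "q \<noteq> p - b"
  shows "q = p + a"
proof -
  have "q - p = a"
    using grid_dirs_third[of a b "q - p"] assms by (auto simp: grid_adj_iff algebra_simps)
  then show ?thesis by (simp add: algebra_simps)
qed

lemma grid_four_cycle_square:
  assumes "grid_adj p q" "grid_adj q s" "grid_adj s r" "grid_adj r p" "p \<noteq> s" "q \<noteq> r"
  shows "s - r = q - p \<and> r - p \<noteq> q - p \<and> r - p \<noteq> p - q"
proof -
  have "q - p \<in> grid_dirs" "s - q \<in> grid_dirs" "r - s \<in> grid_dirs" "p - r \<in> grid_dirs"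
    using assms(1-4) by (simp_all add: grid_adj_iff)
  moreover have "(q - p) + (s - q) + (r - s) + (p - r) = 0" by simp
  moreover have "(q - p) + (s - q) \<noteq> 0" "(s - q) + (r - s) \<noteq> 0" using assms(5,6) by auto
  ultimately have "r - s = - (q - p) \<and> p - r \<noteq> q - p \<and> p - r \<noteq> - (q - p)"
    by (rule grid_dirs_four_cycle)
  then show ?thesis by (auto simp: algebra_simps)
qed

section \<open>Rigidity of ladders\<close>

lemma diff_const_of_equal_steps:
  fixes u w :: "nat \<Rightarrow> 'a::ab_group_add"
  assumes "\<And>k. k < n \<Longrightarrow> w (Suc k) - w k = u (Suc k) - u k"
  shows "k \<le> n \<Longrightarrow> w k - u k = w 0 - u 0"
proof (induction k)
  case (Suc k)
  then have "w (Suc k) - u (Suc k) = w k - u k" using assms[of k] by (simp add: algebra_simps)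
  then show ?case using Suc by simp
qed simp

text \<open>An injective grid image of a ladder with rails \<open>u, v\<close> and rungs \<open>{u k, v k}\<close>; of
  injectivity only the two instances used in the proof are assumed.\<close>

locale grid_ladder =
  fixes u v :: "nat \<Rightarrow> point" and n :: nat
  assumes rung: "\<And>k. k \<le> n \<Longrightarrow> grid_adj (u k) (v k)"
    and rail_u: "\<And>k. k < n \<Longrightarrow> grid_adj (u k) (u (Suc k))"
    and rail_v: "\<And>k. k < n \<Longrightarrow> grid_adj (v k) (v (Suc k))"
    and diagonals: "\<And>k. k < n \<Longrightarrow> u (Suc k) \<noteq> v k \<and> v (Suc k) \<noteq> u k"
    and no_fold: "\<And>k. Suc k < n \<Longrightarrow> u (Suc (Suc k)) \<noteq> u k"
begin

lemma square:
  assumes "k < n"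
  shows "v (Suc k) - u (Suc k) = v k - u k \<and>
    u (Suc k) - u k \<noteq> v k - u k \<and> u (Suc k) - u k \<noteq> u k - v k"
proof (rule grid_four_cycle_square)
  show "grid_adj (u k) (v k)" "grid_adj (v k) (v (Suc k))"
    using assms by (auto intro: rung rail_v)
  show "grid_adj (v (Suc k)) (u (Suc k))" "grid_adj (u (Suc k)) (u k)"
    using assms grid_adj_sym rung[of "Suc k"] rail_u[of k] by auto
  show "u k \<noteq> v (Suc k)" "v k \<noteq> u (Suc k)" using diagonals[OF assms] by auto
qed

lemma rung_const: "k \<le> n \<Longrightarrow> v k - u k = v 0 - u 0"
  by (induction k) (auto dest: square[OF Suc_le_lessD])

lemma step_const: "k < n \<Longrightarrow> u (Suc k) - u k = u 1 - u 0"
proof (induction k)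
  case (Suc k)
  let ?a = "u (Suc k) - u k" and ?b = "v (Suc k) - u (Suc k)"
  have "u (Suc (Suc k)) - u (Suc k) = ?a"
  proof (rule grid_dirs_third)
    show "?a \<in> grid_dirs" "?b \<in> grid_dirs" "u (Suc (Suc k)) - u (Suc k) \<in> grid_dirs"
      using Suc.prems rail_u[of k] rung[of "Suc k"] rail_u[of "Suc k"] by (simp_all add: grid_adj_iff)
    have "?b = v k - u k" using square[of k] Suc.prems by simp
    then show "?b \<noteq> ?a" "?b \<noteq> - ?a" using square[of k] Suc.prems by (auto simp: algebra_simps)
    show "u (Suc (Suc k)) - u (Suc k) \<noteq> ?b" "u (Suc (Suc k)) - u (Suc k) \<noteq> - ?b"
      using square[of "Suc k"] Suc.prems by auto
    show "u (Suc (Suc k)) - u (Suc k) \<noteq> - ?a" using no_fold[of k] Suc.prems by auto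
  qed
  then show ?case using Suc by simp
qed simp

end

section \<open>Grid embeddings of two glued combs\<close>

definition grid_embedding :: "point set \<Rightarrow> (point \<Rightarrow> point) \<Rightarrow> bool" where
  "grid_embedding P F \<longleftrightarrow> inj_on F P \<and> (\<forall>p\<in>P. \<forall>q\<in>P. grid_adj p q \<longrightarrow> grid_adj (F p) (F q))"

lemma grid_embedding_adj:
  "grid_embedding P F \<Longrightarrow> p \<in> P \<Longrightarrow> q \<in> P \<Longrightarrow> grid_adj p q \<Longrightarrow> grid_adj (F p) (F q)"
  by (simp add: grid_embedding_def)

lemma grid_embedding_eq_iff:
  "grid_embedding P F \<Longrightarrow> p \<in> P \<Longrightarrow> q \<in> P \<Longrightarrow> F p = F q \<longleftrightarrow> p = q"
  by (auto simp: grid_embedding_def dest: inj_onD)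

text \<open>What a grid embedding of \<open>P\<close> and \<open>Q\<close> glued along \<open>T\<close> amounts to.\<close>

definition grid_embedding_pair ::
  "point set \<Rightarrow> point set \<Rightarrow> point set \<Rightarrow> (point \<Rightarrow> point) \<Rightarrow> (point \<Rightarrow> point) \<Rightarrow> bool" where
  "grid_embedding_pair T P Q F G \<longleftrightarrow> grid_embedding P F \<and> grid_embedding Q G \<and>
     (\<forall>t\<in>T. F t = G t) \<and> (\<forall>p\<in>P. \<forall>q\<in>Q. F p = G q \<longrightarrow> p \<in> T)"

lemma grid_embedding_pair_eq_iff:
  assumes "grid_embedding_pair T P Q F G" "T \<subseteq> Q" "p \<in> P" "q \<in> Q"
  shows "F p = G q \<longleftrightarrow> p = q \<and> p \<in> T"
proof
  assume "F p = G q"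
  moreover from this have "p \<in> T" using assms by (auto simp: grid_embedding_pair_def)
  ultimately show "p = q \<and> p \<in> T"
    using assms grid_embedding_eq_iff[of Q G p q] by (auto simp: grid_embedding_pair_def)
qed (use assms in \<open>auto simp: grid_embedding_pair_def\<close>)

definition shared_pts :: "point set" where
  "shared_pts = {(0, 0), (0, 1)}"

definition comb :: "int \<Rightarrow> nat \<Rightarrow> nat set \<Rightarrow> point set" where
  "comb s M X = {(x, y). (x = s \<or> x = 2 * s) \<and> 0 \<le> y \<and> y \<le> int M \<or>
     x = 0 \<and> (y = 0 \<or> y = 1 \<or> (\<exists>i\<in>X. y = int i + 2))}"

lemma shared_pts_subset_comb: "shared_pts \<subseteq> comb s M X"
  by (auto simp: shared_pts_def comb_def)

lemma comb_rails_ladder: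
  assumes "grid_embedding (comb s M X) F" "s \<in> {-1, 1}"
  shows "grid_ladder (\<lambda>k. F (s, int k)) (\<lambda>k. F (2 * s, int k)) M"
  using assms
  by unfold_locales (auto intro!: grid_embedding_adj[OF assms(1)]
      simp: grid_embedding_eq_iff[OF assms(1)] comb_def grid_adj_Pair)

text \<open>Seen through \<open>join_maps\<close>, the bottom two rows of two glued combs form one \<open>2 \<times> 5\<close> ladder.\<close>

definition join_maps :: "(point \<Rightarrow> point) \<Rightarrow> (point \<Rightarrow> point) \<Rightarrow> point \<Rightarrow> point" where
  "join_maps F G p = (if fst p \<le> 0 then F p else G p)"

lemma comb_pair_bottom_ladder:
  assumes FG: "grid_embedding_pair shared_pts (comb (-1) M A) (comb 1 M B) F G" and M: "1 \<le> M"
  shows "grid_ladder (\<lambda>k. join_maps F G (int k - 2, 0)) (\<lambda>k. join_maps F G (int k - 2, 1)) 4"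
proof -
  let ?P = "comb (-1) M A" and ?Q = "comb 1 M B"
  have F: "grid_embedding ?P F" and G: "grid_embedding ?Q G"
    and shared: "\<And>t. t \<in> shared_pts \<Longrightarrow> F t = G t"
    using FG by (auto simp: grid_embedding_pair_def)
  note adjF = grid_embedding_adj[OF F] and adjG = grid_embedding_adj[OF G]
  have adjFG: "grid_adj (F p) (G q)"
    if "p \<in> ?Q" "q \<in> ?Q" "p \<in> shared_pts" "grid_adj p q" for p q
    using adjG[of p q] shared that by simp
  have F_eq_G_iff: "F p = G q \<longleftrightarrow> p = q \<and> p \<in> shared_pts"
    and G_eq_F_iff: "G q = F p \<longleftrightarrow> p = q \<and> p \<in> shared_pts" if "p \<in> ?P" "q \<in> ?Q" for p q
    using grid_embedding_pair_eq_iff[OF FG shared_pts_subset_comb that] by auto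
  note facts = join_maps_def grid_embedding_eq_iff[OF F] grid_embedding_eq_iff[OF G]
    F_eq_G_iff G_eq_F_iff comb_def shared_pts_def grid_adj_Pair
  show ?thesis
  proof
    fix k :: nat
    assume "k \<le> 4"
    then have "k \<in> {0, 1, 2, 3, 4}" by auto
    then show "grid_adj (join_maps F G (int k - 2, 0)) (join_maps F G (int k - 2, 1))"
      using M by (auto intro!: adjF adjG simp: facts)
  next
    fix k :: nat
    assume "k < 4"
    then have k: "k \<in> {0, 1, 2, 3}" by auto
    show "grid_adj (join_maps F G (int k - 2, 0)) (join_maps F G (int (Suc k) - 2, 0))"
      "grid_adj (join_maps F G (int k - 2, 1)) (join_maps F G (int (Suc k) - 2, 1))"
      using k M by (auto intro!: adjF adjG adjFG simp: facts)
    show "join_maps F G (int (Suc k) - 2, 0) \<noteq> join_maps F G (int k - 2, 1) \<and>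
        join_maps F G (int (Suc k) - 2, 1) \<noteq> join_maps F G (int k - 2, 0)"
      using k M by (auto simp: facts)
  next
    fix k :: nat
    assume "Suc k < 4"
    then have "k \<in> {0, 1, 2}" by auto
    then show "join_maps F G (int (Suc (Suc k)) - 2, 0) \<noteq> join_maps F G (int k - 2, 0)"
      using M by (auto simp: facts)
  qed
qed

lemma comb_pair_embedding_rigid:
  assumes FG: "grid_embedding_pair shared_pts (comb (-1) M A) (comb 1 M B) F G"
    and M: "1 \<le> M"
  obtains a b where "a \<in> grid_dirs" "b \<in> grid_dirs" "b \<noteq> a" "b \<noteq> - a"
    "\<And>k. k \<le> M \<Longrightarrow> F (-2, int k) = F (-1, int k) - a"
    "\<And>k. k \<le> M \<Longrightarrow> G (1, int k) = F (-1, int k) + a + a"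
    "\<And>k. k \<le> M \<Longrightarrow> G (2, int k) = G (1, int k) + a"
    "\<And>k. k < M \<Longrightarrow> F (-1, int k + 1) = F (-1, int k) + b"
    "\<And>k. k < M \<Longrightarrow> G (1, int k + 1) = G (1, int k) + b"
proof -
  have F: "grid_embedding (comb (-1) M A) F" and G: "grid_embedding (comb 1 M B) G"
    using FG by (auto simp: grid_embedding_pair_def)
  interpret bottom: grid_ladder "\<lambda>k. join_maps F G (int k - 2, 0)" "\<lambda>k. join_maps F G (int k - 2, 1)" 4
    by (rule comb_pair_bottom_ladder[OF FG M])
  interpret left: grid_ladder "\<lambda>k. F (-1, int k)" "\<lambda>k. F (-2, int k)" M
    using comb_rails_ladder[OF F] by simp
  interpret right: grid_ladder "\<lambda>k. G (1, int k)" "\<lambda>k. G (2, int k)" M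
    using comb_rails_ladder[OF G] by simp
  define a where "a = F (-1, 0) - F (-2, 0)"
  define b where "b = F (-2, 1) - F (-2, 0)"
  have bottom_steps: "F (0, 0) - F (-1, 0) = a" "G (1, 0) - F (0, 0) = a" "G (2, 0) - G (1, 0) = a"
    using bottom.step_const[of 1] bottom.step_const[of 2] bottom.step_const[of 3]
    by (simp_all add: join_maps_def a_def)
  have bottom_rungs: "F (-1, 1) - F (-1, 0) = b" "G (1, 1) - G (1, 0) = b"
    using bottom.rung_const[of 1] bottom.rung_const[of 3] by (simp_all add: join_maps_def b_def)
  show thesis
  proof
    show "a \<in> grid_dirs" "b \<in> grid_dirs"
      using M grid_embedding_adj[OF F, of "(-2, 0)" "(-1, 0)"] grid_embedding_adj[OF F, of "(-2, 0)" "(-2, 1)"]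
      by (simp_all add: a_def b_def grid_adj_iff comb_def grid_dirs_def)
    show "b \<noteq> a" "b \<noteq> - a"
      using bottom.square[of 0] by (auto simp: join_maps_def a_def b_def algebra_simps)
    fix k
    assume "k \<le> M"
    then show "F (-2, int k) = F (-1, int k) - a"
      using left.rung_const[of k] by (simp add: a_def algebra_simps)
    show "G (2, int k) = G (1, int k) + a"
      using right.rung_const[of k] \<open>k \<le> M\<close> bottom_steps by (simp add: algebra_simps)
    have "G (1, int k) - F (-1, int k) = G (1, 0) - F (-1, 0)"
      using left.step_const right.step_const bottom_rungs \<open>k \<le> M\<close>
      by (intro diff_const_of_equal_steps[where u = "\<lambda>k. F (-1, int k)" and w = "\<lambda>k. G (1, int k)",
            simplified]) auto
    then show "G (1, int k) = F (-1, int k) + a + a"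
      using bottom_steps by (simp add: algebra_simps)
  next
    fix k
    assume "k < M"
    then show "F (-1, int k + 1) = F (-1, int k) + b" "G (1, int k + 1) = G (1, int k) + b"
      using left.step_const[of k] right.step_const[of k] bottom_rungs by (simp_all add: algebra_simps)
  qed
qed

lemma comb_pair_teeth_collide:
  assumes FG: "grid_embedding_pair shared_pts (comb (-1) M A) (comb 1 M B) F G"
    and i: "i \<in> A" "i \<in> B" "i + 3 \<le> M"
  shows "F (0, int i + 2) = G (0, int i + 2)"
proof -
  have F: "grid_embedding (comb (-1) M A) F" and G: "grid_embedding (comb 1 M B) G"
    using FG by (auto simp: grid_embedding_pair_def)
  have M: "1 \<le> M" using i by simp
  obtain a b where dirs: "a \<in> grid_dirs" "b \<in> grid_dirs" "b \<noteq> a" "b \<noteq> - a"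
    and rungs: "\<And>k. k \<le> M \<Longrightarrow> F (-2, int k) = F (-1, int k) - a"
      "\<And>k. k \<le> M \<Longrightarrow> G (1, int k) = F (-1, int k) + a + a"
      "\<And>k. k \<le> M \<Longrightarrow> G (2, int k) = G (1, int k) + a"
    and rails: "\<And>k. k < M \<Longrightarrow> F (-1, int k + 1) = F (-1, int k) + b"
      "\<And>k. k < M \<Longrightarrow> G (1, int k + 1) = G (1, int k) + b"
    using comb_pair_embedding_rigid[OF FG M] by blast
  note facts = grid_embedding_eq_iff[OF F] grid_embedding_eq_iff[OF G] comb_def grid_adj_Pair
  define y where "y = int i + 2"
  have rows: "int (i + 2) = y" "int (i + 2) + 1 = y + 1" "int (i + 1) = y - 1" "int (i + 1) + 1 = y"
    by (simp_all add: y_def)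
  have nbrs: "F (-2, y) = F (-1, y) - a" "F (-1, y + 1) = F (-1, y) + b" "F (-1, y - 1) = F (-1, y) - b"
    "G (2, y) = G (1, y) + a" "G (1, y + 1) = G (1, y) + b" "G (1, y - 1) = G (1, y) - b"
    "G (1, y) = F (-1, y) + a + a"
    using rungs[of "i + 2"] rails[of "i + 2"] rails[of "i + 1"] i unfolding rows
    by (simp_all add: algebra_simps)
  have tooth: "(0, y) \<in> comb (-1) M A" "(0, y) \<in> comb 1 M B"
    using i by (auto simp: comb_def y_def)
  \<comment> \<open>Three of the four grid neighbours of a rail point are taken by the rails.\<close>
  have "F (0, y) = F (-1, y) + a"
  proof (rule grid_adj_remaining_dir[OF _ dirs])
    show "grid_adj (F (-1, y)) (F (0, y))"
      using i tooth by (intro grid_embedding_adj[OF F]) (auto simp: comb_def grid_adj_Pair y_def)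
    show "F (0, y) \<noteq> F (-1, y) - a" "F (0, y) \<noteq> F (-1, y) + b" "F (0, y) \<noteq> F (-1, y) - b"
      using i tooth unfolding nbrs(1-3)[symmetric] by (auto simp: facts y_def)
  qed
  moreover have "G (0, y) = G (1, y) + - a"
  proof (rule grid_adj_remaining_dir)
    show "grid_adj (G (1, y)) (G (0, y))"
      using i tooth by (intro grid_embedding_adj[OF G]) (auto simp: comb_def grid_adj_Pair y_def)
    show "- a \<in> grid_dirs" "b \<in> grid_dirs" "b \<noteq> - a" "b \<noteq> - (- a)"
      using dirs uminus_grid_dirs by auto
    show "G (0, y) \<noteq> G (1, y) - - a" "G (0, y) \<noteq> G (1, y) + b" "G (0, y) \<noteq> G (1, y) - b"
      using i tooth unfolding diff_minus_eq_add nbrs(4-6)[symmetric] by (auto simp: facts y_def)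
  qed
  ultimately show ?thesis
    using nbrs(7) unfolding y_def by (simp add: algebra_simps)
qed

lemma comb_pair_not_grid_embeddable:
  assumes FG: "grid_embedding_pair shared_pts (comb (-1) M A) (comb 1 M B) F G"
    and i: "i \<in> A" "i \<in> B" "i + 3 \<le> M"
  shows False
proof -
  have "(0, int i + 2) \<in> comb (-1) M A" "(0, int i + 2) \<in> comb 1 M B"
    using i by (auto simp: comb_def)
  then have "(0, int i + 2) \<in> shared_pts"
    using comb_pair_teeth_collide[OF assms] FG by (auto simp: grid_embedding_pair_def)
  then show False by (simp add: shared_pts_def)
qed

section \<open>Gluing graphs\<close>

definition graph_adj :: "'a graph \<Rightarrow> 'a \<Rightarrow> 'a \<Rightarrow> bool" where
  "graph_adj G x y \<longleftrightarrow> x \<in> verts G \<and> y \<in> verts G \<and> {x, y} \<in> edges G"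

lemma connected_graph_iff:
  "connected_graph G \<longleftrightarrow> verts G \<noteq> {} \<and> (\<forall>u\<in>verts G. \<forall>v\<in>verts G. (graph_adj G)\<^sup>*\<^sup>* u v)"
  by (simp add: connected_graph_def graph_adj_def[abs_def])

lemma rtranclp_map:
  assumes "\<And>x y. R x y \<Longrightarrow> S (h x) (h y)" and "R\<^sup>*\<^sup>* x y"
  shows "S\<^sup>*\<^sup>* (h x) (h y)"
  using assms(2) by induction (auto intro: rtranclp.rtrancl_into_rtrancl assms(1))

lemma graph_adj_rtranclp_image:
  assumes "h ` verts G \<subseteq> verts H" "image h ` edges G \<subseteq> edges H" "(graph_adj G)\<^sup>*\<^sup>* x y"
  shows "(graph_adj H)\<^sup>*\<^sup>* (h x) (h y)"
proof (rule rtranclp_map[OF _ assms(3)])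
  fix x y
  assume xy: "graph_adj G x y"
  then have "h ` {x, y} \<in> edges H" using assms(2) unfolding graph_adj_def by blast
  then show "graph_adj H (h x) (h y)"
    using xy assms(1) unfolding graph_adj_def by auto
qed

lemma connected_graphI_root:
  assumes "r \<in> verts G" and "\<And>v. v \<in> verts G \<Longrightarrow> (graph_adj G)\<^sup>*\<^sup>* v r"
  shows "connected_graph G"
proof -
  have "symp (graph_adj G)"
    unfolding symp_def graph_adj_def by (simp add: insert_commute)
  then have from_root: "(graph_adj G)\<^sup>*\<^sup>* r v" if "v \<in> verts G" for v
    by (rule sympD[OF symp_rtranclp assms(2)[OF that]])
  show ?thesis
    unfolding connected_graph_iff
  proof (intro conjI ballI)
    show "verts G \<noteq> {}" using assms(1) by blast
    fix u v
    assume "u \<in> verts G" "v \<in> verts G"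
    then show "(graph_adj G)\<^sup>*\<^sup>* u v"
      using rtranclp_trans[OF assms(2) from_root] by blast
  qed
qed

lemma glue_map_eq_Inl_iff [simp]: "glue_map S v = Inl u \<longleftrightarrow> v \<in> S \<and> u = v"
  by (auto simp: glue_map_def)

lemma Inl_eq_glue_map_iff [simp]: "Inl u = glue_map S v \<longleftrightarrow> v \<in> S \<and> u = v"
  by (auto simp: glue_map_def)

lemma glue_map_special [simp]: "s \<in> S \<Longrightarrow> glue_map S s = Inl s"
  by (simp add: glue_map_def)

lemma glue_map_eq_iff [simp]: "glue_map S u = glue_map S v \<longleftrightarrow> u = v"
  by (auto simp: glue_map_def)

lemma doubleton_in_image_image:
  assumes "\<forall>e\<in>E. \<exists>u v. e = {u, v}"
  shows "{a, b} \<in> image h ` E \<longleftrightarrow> (\<exists>x y. {x, y} \<in> E \<and> h x = a \<and> h y = b)"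
proof
  assume "{a, b} \<in> image h ` E"
  then obtain e where e: "{a, b} = h ` e" "e \<in> E" by (rule imageE)
  moreover obtain u v where uv: "e = {u, v}" using assms e(2) by blast
  ultimately have "a = h u \<and> b = h v \<or> a = h v \<and> b = h u" by (simp add: doubleton_eq_iff)
  moreover have "{u, v} \<in> E" "{v, u} \<in> E" using e(2) uv by (simp_all add: insert_commute)
  ultimately show "\<exists>x y. {x, y} \<in> E \<and> h x = a \<and> h y = b" by blast
next
  assume "\<exists>x y. {x, y} \<in> E \<and> h x = a \<and> h y = b"
  then obtain x y where "{x, y} \<in> E" "{a, b} = h ` {x, y}" by auto
  then show "{a, b} \<in> image h ` E" by (rule rev_image_eqI)
qed

lemma wf_graph_edges_doubleton: "wf_graph G \<Longrightarrow> \<forall>e\<in>edges G. \<exists>u v. e = {u, v}"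
  by (auto simp: wf_graph_def dest!: bspec)

lemma wf_graph_edge_verts:
  assumes "wf_graph G" "{u, v} \<in> edges G"
  shows "u \<in> verts G \<and> v \<in> verts G"
proof -
  obtain x y where "{u, v} = {x, y}" "x \<in> verts G" "y \<in> verts G"
    using assms unfolding wf_graph_def by blast
  then show ?thesis by (auto simp: doubleton_eq_iff)
qed

lemma verts_glue: "verts (glue S L R) = Inl ` verts L \<union> glue_map S ` verts R"
  by (simp add: glue_def)

lemma edges_glue: "edges (glue S L R) = image Inl ` edges L \<union> image (glue_map S) ` edges R"
  by (simp add: glue_def)

lemma wf_graph_glue:
  assumes "wf_graph L" "wf_graph R"
  shows "wf_graph (glue S L R)"
  unfolding wf_graph_def
proof (intro conjI ballI)
  show "finite (verts (glue S L R))" using assms by (simp add: wf_graph_def verts_glue)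
  fix e
  assume "e \<in> edges (glue S L R)"
  then consider e' where "e' \<in> edges L" "e = Inl ` e'" | e' where "e' \<in> edges R" "e = glue_map S ` e'"
    unfolding edges_glue by blast
  then show "\<exists>u v. u \<noteq> v \<and> e = {u, v} \<and> u \<in> verts (glue S L R) \<and> v \<in> verts (glue S L R)"
  proof cases
    case 1
    then obtain u v where "u \<noteq> v" "e' = {u, v}" "u \<in> verts L" "v \<in> verts L"
      using assms(1) unfolding wf_graph_def by blast
    then show ?thesis
      using 1 by (intro exI[of _ "Inl u"] exI[of _ "Inl v"]) (simp add: verts_glue)
  next
    case 2
    then obtain u v where "u \<noteq> v" "e' = {u, v}" "u \<in> verts R" "v \<in> verts R"
      using assms(2) unfolding wf_graph_def by blast
    then show ?thesis
      using 2 by (intro exI[of _ "glue_map S u"] exI[of _ "glue_map S v"]) (simp add: verts_glue)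
  qed
qed

lemma card_verts_glue_le:
  assumes "finite (verts L)" "finite (verts R)" "S \<subseteq> verts L" "S \<subseteq> verts R"
  shows "card (verts (glue S L R)) + card S \<le> card (verts L) + card (verts R)"
proof -
  have "verts (glue S L R) = Inl ` verts L \<union> Inr ` (verts R - S)"
    using assms(3) by (auto simp: verts_glue glue_map_def)
  then have "card (verts (glue S L R)) \<le> card (Inl ` verts L :: ('a + 'a) set) + card (Inr ` (verts R - S) :: ('a + 'a) set)"
    by (simp only: card_Un_le)
  also have "\<dots> = card (verts L) + card (verts R - S)"
    by (simp add: card_image)
  also have "card (verts R - S) = card (verts R) - card S"
    using assms(2,4) by (simp add: card_Diff_subset finite_subset)
  finally show ?thesis
    using card_mono[OF assms(2,4)] by linarith
qed

lemma connected_graph_glue: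
  assumes "connected_graph L" "connected_graph R" "s \<in> S" "s \<in> verts L" "s \<in> verts R"
  shows "connected_graph (glue S L R)"
proof (rule connected_graphI_root)
  show "Inl s \<in> verts (glue S L R)" using assms(4) by (simp add: verts_glue)
  fix v
  assume "v \<in> verts (glue S L R)"
  then consider x where "x \<in> verts L" "v = Inl x" | y where "y \<in> verts R" "v = glue_map S y"
    unfolding verts_glue by blast
  then show "(graph_adj (glue S L R))\<^sup>*\<^sup>* v (Inl s)"
  proof cases
    case 1
    then have "(graph_adj L)\<^sup>*\<^sup>* x s" using assms(1,4) unfolding connected_graph_iff by blast
    then show ?thesis
      using graph_adj_rtranclp_image[of Inl L "glue S L R"] 1(2) by (auto simp: verts_glue edges_glue)
  next
    case 2
    then have "(graph_adj R)\<^sup>*\<^sup>* y s" using assms(2,5) unfolding connected_graph_iff by blast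
    then have "(graph_adj (glue S L R))\<^sup>*\<^sup>* (glue_map S y) (glue_map S s)"
      by (rule graph_adj_rtranclp_image[rotated 2]) (auto simp: verts_glue edges_glue)
    then show ?thesis using 2(2) assms(3) by simp
  qed
qed

lemma closed_nbhd_subset_verts: "closed_nbhd G T \<subseteq> verts G"
  by (auto simp: closed_nbhd_def)

lemma Int_closed_nbhd: "T \<inter> closed_nbhd G T = T \<inter> verts G"
  by (auto simp: closed_nbhd_def)

lemma closed_nbhd_glue:
  assumes "wf_graph L" "wf_graph R"
  shows "closed_nbhd (glue S L R) (Inl ` S) = Inl ` closed_nbhd L S \<union> glue_map S ` closed_nbhd R S"
proof -
  have left: "{Inl s, v} \<in> image Inl ` edges L \<longleftrightarrow> (\<exists>y. v = Inl y \<and> {s, y} \<in> edges L)"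
    for s and v :: "'a + 'a"
    unfolding doubleton_in_image_image[OF wf_graph_edges_doubleton[OF assms(1)]] by blast
  have right: "{Inl s, v} \<in> image (glue_map S) ` edges R \<longleftrightarrow>
      s \<in> S \<and> (\<exists>y. v = glue_map S y \<and> {s, y} \<in> edges R)" for s v
    unfolding doubleton_in_image_image[OF wf_graph_edges_doubleton[OF assms(2)]] by auto
  note edge_verts = wf_graph_edge_verts[OF assms(1)] wf_graph_edge_verts[OF assms(2)]
  show ?thesis
  proof (intro equalityI subsetI)
    fix v
    assume "v \<in> closed_nbhd (glue S L R) (Inl ` S)"
    then consider s where "s \<in> S" "v = Inl s" "v \<in> verts (glue S L R)"
      | s where "s \<in> S" "{Inl s, v} \<in> edges (glue S L R)"
      unfolding closed_nbhd_def by blast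
    then show "v \<in> Inl ` closed_nbhd L S \<union> glue_map S ` closed_nbhd R S"
    proof cases
      case 1
      then show ?thesis by (auto simp: verts_glue closed_nbhd_def image_iff)
    next
      case 2
      then show ?thesis
        unfolding edges_glue Un_iff left right closed_nbhd_def using edge_verts by blast
    qed
  next
    fix v
    have nbhdI: "v \<in> closed_nbhd (glue S L R) (Inl ` S)"
      if "v \<in> verts (glue S L R)" "s \<in> S" "{Inl s, v} \<in> edges (glue S L R)" for s
      using that unfolding closed_nbhd_def by blast
    assume "v \<in> Inl ` closed_nbhd L S \<union> glue_map S ` closed_nbhd R S"
    then consider y where "v = Inl y" "y \<in> S" "y \<in> verts L"
      | y s where "v = Inl y" "y \<in> verts L" "s \<in> S" "{s, y} \<in> edges L"
      | y where "v = glue_map S y" "y \<in> S" "y \<in> verts R"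
      | y s where "v = glue_map S y" "y \<in> verts R" "s \<in> S" "{s, y} \<in> edges R"
      unfolding closed_nbhd_def by blast
    then show "v \<in> closed_nbhd (glue S L R) (Inl ` S)"
    proof cases
      case (2 y s)
      then show ?thesis by (intro nbhdI[of s]) (simp_all add: verts_glue edges_glue left)
    next
      case (4 y s)
      then show ?thesis by (intro nbhdI[of s]) (simp_all add: verts_glue edges_glue right)
    qed (auto simp: closed_nbhd_def verts_glue)
  qed
qed

lemma induced_glue:
  assumes "S \<inter> W = S \<inter> W'"
  shows "induced (glue S L R) (Inl ` W \<union> glue_map S ` W') = glue S (induced L W) (induced R W')"
proof -
  let ?U = "Inl ` W \<union> glue_map S ` W'"
  have left: "Inl x \<in> ?U \<longleftrightarrow> x \<in> W" for x
    using assms by (auto simp: glue_map_def)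
  have right: "glue_map S x \<in> ?U \<longleftrightarrow> x \<in> W'" for x
    using assms by (auto simp: glue_map_def)
  have verts_eq: "?U \<inter> verts (glue S L R) = Inl ` (W \<inter> verts L) \<union> glue_map S ` (W' \<inter> verts R)"
    unfolding verts_glue using assms by (auto simp: left right image_iff)
  have image_sub: "Inl ` e \<subseteq> ?U \<longleftrightarrow> e \<subseteq> W" "glue_map S ` e \<subseteq> ?U \<longleftrightarrow> e \<subseteq> W'" for e
    by (simp_all only: image_subset_iff left right flip: subset_eq)
  have "{e \<in> edges (glue S L R). e \<subseteq> ?U} =
      {e \<in> image Inl ` edges L. e \<subseteq> ?U} \<union> {e \<in> image (glue_map S) ` edges R. e \<subseteq> ?U}"
    unfolding edges_glue by blast
  also have "\<dots> = image Inl ` {e \<in> edges L. e \<subseteq> W} \<union> image (glue_map S) ` {e \<in> edges R. e \<subseteq> W'}"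
    by (simp only: Compr_image_eq image_sub)
  finally show ?thesis
    using verts_eq by (simp add: induced_def glue_def)
qed

lemma induced_closed_nbhd_glue:
  assumes "wf_graph L" "wf_graph R" "S \<inter> verts L = S \<inter> verts R"
  shows "induced (glue S L R) (closed_nbhd (glue S L R) (Inl ` S)) =
    glue S (induced L (closed_nbhd L S)) (induced R (closed_nbhd R S))"
  using induced_glue[of S "closed_nbhd L S" "closed_nbhd R S" L R] assms
  by (simp add: closed_nbhd_glue Int_closed_nbhd)

lemma iso_fixing_refl: "iso_fixing T G G"
  unfolding iso_fixing_def by (intro exI[of _ id]) auto

section \<open>Grid graphs\<close>

definition grid_graph :: "point set \<Rightarrow> nat graph" where
  "grid_graph P = \<lparr>verts = to_nat ` P,
     edges = {{to_nat p, to_nat q} | p q. p \<in> P \<and> q \<in> P \<and> grid_adj p q}\<rparr>"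

lemma verts_grid_graph: "verts (grid_graph P) = to_nat ` P"
  by (simp add: grid_graph_def)

lemma doubleton_in_edges_grid_graph:
  "{x, y} \<in> edges (grid_graph P) \<longleftrightarrow> (\<exists>p\<in>P. \<exists>q\<in>P. x = to_nat p \<and> y = to_nat q \<and> grid_adj p q)"
proof
  assume "{x, y} \<in> edges (grid_graph P)"
  then obtain p q where pq: "{x, y} = {to_nat p, to_nat q}" "p \<in> P" "q \<in> P" "grid_adj p q"
    by (auto simp: grid_graph_def)
  then have "x = to_nat p \<and> y = to_nat q \<or> x = to_nat q \<and> y = to_nat p"
    by (simp add: doubleton_eq_iff)
  then show "\<exists>p\<in>P. \<exists>q\<in>P. x = to_nat p \<and> y = to_nat q \<and> grid_adj p q"
    using pq grid_adj_sym by blast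
qed (auto simp: grid_graph_def)

lemma to_nat_doubleton_in_edges_grid_graph [simp]:
  "{to_nat p, to_nat q} \<in> edges (grid_graph P) \<longleftrightarrow> p \<in> P \<and> q \<in> P \<and> grid_adj p q"
  by (simp add: doubleton_in_edges_grid_graph)

lemma graph_adj_grid_graph [simp]:
  "graph_adj (grid_graph P) (to_nat p) (to_nat q) \<longleftrightarrow> p \<in> P \<and> q \<in> P \<and> grid_adj p q"
  by (auto simp: graph_adj_def verts_grid_graph)

lemma wf_grid_graph:
  assumes "finite P"
  shows "wf_graph (grid_graph P)"
  unfolding wf_graph_def
proof (intro conjI ballI)
  show "finite (verts (grid_graph P))" using assms by (simp add: verts_grid_graph)
  fix e
  assume "e \<in> edges (grid_graph P)"
  then obtain p q where "e = {to_nat p, to_nat q}" "p \<in> P" "q \<in> P" "grid_adj p q"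
    by (auto simp: grid_graph_def)
  then show "\<exists>u v. u \<noteq> v \<and> e = {u, v} \<and> u \<in> verts (grid_graph P) \<and> v \<in> verts (grid_graph P)"
    by (intro exI[of _ "to_nat p"] exI[of _ "to_nat q"]) (auto simp: verts_grid_graph dest: grid_adj_irrefl)
qed

lemma card_verts_grid_graph: "card (verts (grid_graph P)) = card P"
  by (simp add: verts_grid_graph card_image)

lemma closed_nbhd_grid_graph:
  assumes "T \<subseteq> P"
  shows "closed_nbhd (grid_graph P) (to_nat ` T) =
    to_nat ` {q \<in> P. q \<in> T \<or> (\<exists>t\<in>T. grid_adj t q)}"
  using assms unfolding closed_nbhd_def verts_grid_graph by auto blast

lemma induced_grid_graph: "induced (grid_graph P) (to_nat ` K) = grid_graph (P \<inter> K)"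
proof -
  have "{e \<in> edges (grid_graph P). e \<subseteq> to_nat ` K} = edges (grid_graph (P \<inter> K))"
  proof (intro equalityI subsetI)
    fix e
    assume "e \<in> {e \<in> edges (grid_graph P). e \<subseteq> to_nat ` K}"
    then obtain p q where pq: "e = {to_nat p, to_nat q}" "p \<in> P" "q \<in> P" "grid_adj p q"
      and "e \<subseteq> to_nat ` K"
      by (auto simp: grid_graph_def)
    then have "p \<in> K" "q \<in> K" by (auto simp: inj_image_mem_iff)
    then show "e \<in> edges (grid_graph (P \<inter> K))"
      using pq by simp
  qed (auto simp: grid_graph_def)
  moreover have "to_nat ` K \<inter> to_nat ` P = to_nat ` (P \<inter> K)" by auto
  ultimately show ?thesis
    by (simp add: induced_def grid_graph_def)
qed

lemma grid_subgraph_glue_grid_graphs: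
  assumes "finite P" "finite Q" "P \<inter> Q \<subseteq> T"
  shows "grid_subgraph (glue (to_nat ` T) (grid_graph P) (grid_graph Q))"
    (is "grid_subgraph ?G")
proof -
  let ?f = "case_sum from_nat from_nat :: nat + nat \<Rightarrow> point"
  have f_glue_map [simp]: "?f (glue_map S n) = from_nat n" for S n
    by (simp add: glue_map_def)
  have "inj_on ?f (verts ?G)"
  proof (rule inj_onI)
    fix x y
    assume "x \<in> verts ?G" "y \<in> verts ?G" "?f x = ?f y"
    then show "x = y"
      using assms(3) unfolding verts_glue verts_grid_graph by (auto simp: image_iff)
  qed
  moreover have "grid_adj (?f u) (?f v)" if "{u, v} \<in> edges ?G" for u v
  proof -
    from that consider x y where "{x, y} \<in> edges (grid_graph P)" "u = Inl x" "v = Inl y"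
      | x y where "{x, y} \<in> edges (grid_graph Q)" "u = glue_map (to_nat ` T) x" "v = glue_map (to_nat ` T) y"
      unfolding edges_glue Un_iff
        doubleton_in_image_image[OF wf_graph_edges_doubleton[OF wf_grid_graph[OF assms(1)]]]
        doubleton_in_image_image[OF wf_graph_edges_doubleton[OF wf_grid_graph[OF assms(2)]]]
      by metis
    then show ?thesis
      by cases (auto simp: doubleton_in_edges_grid_graph)
  qed
  ultimately show ?thesis
    unfolding grid_subgraph_def using assms wf_graph_glue wf_grid_graph by blast
qed

lemma grid_subgraph_glue_grid_graphsD:
  assumes "grid_subgraph (glue (to_nat ` T) (grid_graph P) (grid_graph Q))" (is "grid_subgraph ?G")
  obtains F G where "grid_embedding_pair T P Q F G"
proof -
  obtain f where f: "inj_on f (verts ?G)"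
    "\<And>u v. u \<in> verts ?G \<Longrightarrow> v \<in> verts ?G \<Longrightarrow> {u, v} \<in> edges ?G \<Longrightarrow> grid_adj (f u) (f v)"
    using assms unfolding grid_subgraph_def by blast
  let ?gm = "glue_map (to_nat ` T)"
  have vl: "Inl (to_nat p) \<in> verts ?G" if "p \<in> P" for p
    using that by (simp add: verts_glue verts_grid_graph)
  have vr: "?gm (to_nat q) \<in> verts ?G" if "q \<in> Q" for q
    using that by (simp add: verts_glue verts_grid_graph)
  have el: "{Inl (to_nat p), Inl (to_nat q)} \<in> edges ?G" if "p \<in> P" "q \<in> P" "grid_adj p q" for p q
  proof -
    have "Inl ` {to_nat p, to_nat q} \<in> image (Inl :: nat \<Rightarrow> nat + nat) ` edges (grid_graph P)"
      using that by (intro imageI) simp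
    then show ?thesis unfolding edges_glue by simp
  qed
  have er: "{?gm (to_nat p), ?gm (to_nat q)} \<in> edges ?G" if "p \<in> Q" "q \<in> Q" "grid_adj p q" for p q
  proof -
    have "?gm ` {to_nat p, to_nat q} \<in> image ?gm ` edges (grid_graph Q)"
      using that by (intro imageI) simp
    then show ?thesis unfolding edges_glue by simp
  qed
  have eq: "x = y" if "f x = f y" "x \<in> verts ?G" "y \<in> verts ?G" for x y
    using f(1) that by (auto dest: inj_onD)
  show ?thesis
  proof (rule that[of "f \<circ> Inl \<circ> to_nat" "f \<circ> ?gm \<circ> to_nat"])
    show "grid_embedding_pair T P Q (f \<circ> Inl \<circ> to_nat) (f \<circ> ?gm \<circ> to_nat)"
      unfolding grid_embedding_pair_def grid_embedding_def
      by (auto intro!: inj_onI f(2) vl vr el er dest!: eq simp: vl vr)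
  qed
qed

section \<open>The glued comb graphs\<close>

lemma comb_subset:
  "comb s M X \<subseteq> (\<lambda>(x, j). (x, int j)) ` ({s, 2 * s} \<times> {..M}) \<union> shared_pts \<union> (\<lambda>i. (0, int i + 2)) ` X"
proof
  fix p
  assume p: "p \<in> comb s M X"
  obtain x y where xy: "p = (x, y)" by fastforce
  show "p \<in> (\<lambda>(x, j). (x, int j)) ` ({s, 2 * s} \<times> {..M}) \<union> shared_pts \<union> (\<lambda>i. (0, int i + 2)) ` X"
  proof (cases "(x = s \<or> x = 2 * s) \<and> 0 \<le> y \<and> y \<le> int M")
    case True
    then obtain j where "y = int j" "j \<le> M" using nonneg_int_cases by fastforce
    then show ?thesis using True xy by (auto intro!: rev_image_eqI[of "(x, j)"])
  next
    case False
    then show ?thesis using p xy by (auto simp: comb_def shared_pts_def)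
  qed
qed

lemma finite_comb: "finite X \<Longrightarrow> finite (comb s M X)"
  by (rule finite_subset[OF comb_subset]) (simp add: shared_pts_def)

lemma card_comb_le:
  assumes "finite X"
  shows "card (comb s M X) \<le> 2 * M + 4 + card X"
proof -
  let ?rails = "(\<lambda>(x, j). (x, int j)) ` ({s, 2 * s} \<times> {..M})"
  have "card (comb s M X) \<le> card (?rails \<union> shared_pts \<union> (\<lambda>i. (0, int i + 2)) ` X)"
    using assms by (intro card_mono comb_subset) (simp add: shared_pts_def)
  also have "\<dots> \<le> card ?rails + card shared_pts + card ((\<lambda>i. (0::int, int i + 2)) ` X)"
    by (meson card_Un_le add_le_mono order_trans order_refl)
  also have "\<dots> \<le> card ({s, 2 * s} \<times> {..M}) + 2 + card X"
    by (intro add_mono card_image_le) (simp_all add: shared_pts_def assms)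
  also have "card ({s, 2 * s} \<times> {..M}) \<le> 2 * Suc M"
  proof -
    have "card {s, 2 * s} \<le> 2" by (cases "s = 2 * s") simp_all
    then show ?thesis unfolding card_cartesian_product card_atMost by (rule mult_le_mono1)
  qed
  finally show ?thesis by simp
qed

lemma shared_in_verts_grid_graph_comb: "to_nat ` shared_pts \<subseteq> verts (grid_graph (comb s M X))"
  unfolding verts_grid_graph by (intro image_mono shared_pts_subset_comb)

lemma connected_grid_graph_comb:
  assumes s: "s \<in> {-1, 1}" and teeth: "\<forall>i\<in>X. i + 2 \<le> M"
  shows "connected_graph (grid_graph (comb s M X))"
proof (rule connected_graphI_root)
  let ?P = "comb s M X"
  let ?reach = "(graph_adj (grid_graph ?P))\<^sup>*\<^sup>*"
  have step: "?reach (to_nat p) r" if "?reach (to_nat q) r" "p \<in> ?P" "q \<in> ?P" "grid_adj p q" for p q r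
    by (rule converse_rtranclp_into_rtranclp[OF _ that(1)]) (simp add: that(2-4))
  have horizontal: "grid_adj (s, y) (0, y)" "grid_adj (0, y) (s, y)" "grid_adj (2 * s, y) (s, y)" for y
    using s by (auto simp: grid_adj_Pair)
  let ?root = "to_nat ((0, 0) :: point)"
  have rail: "?reach (to_nat (s, int j)) ?root" if "j \<le> M" for j
    using that
  proof (induction j)
    case 0
    show ?case
      unfolding of_nat_0
      by (rule step[where q = "(0, 0)"]) (auto simp: comb_def horizontal intro: rtranclp.rtrancl_refl)
  next
    case (Suc j)
    then have "?reach (to_nat (s, int j)) ?root" by simp
    then show ?case
      by (rule step) (use Suc.prems in \<open>auto simp: comb_def grid_adj_Pair\<close>)
  qed
  show "?root \<in> verts (grid_graph ?P)" by (simp add: verts_grid_graph comb_def)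
  fix v
  assume "v \<in> verts (grid_graph ?P)"
  then obtain x y where v: "v = to_nat (x, y)" and xy: "(x, y) \<in> ?P" by (auto simp: verts_grid_graph)
  then consider j where "x = s" "y = int j" "j \<le> M" | j where "x = 2 * s" "y = int j" "j \<le> M"
    | "x = 0" "y = 0" | "x = 0" "y = 1" | i where "x = 0" "y = int (i + 2)" "i \<in> X"
    unfolding comb_def by (auto; metis nonneg_int_cases)
  then show "?reach v ?root"
  proof cases
    case (2 j)
    then have "?reach (to_nat (s, y)) ?root" using rail[of j] by simp
    then show ?thesis
      unfolding v by (rule step) (use 2 xy in \<open>auto simp: comb_def horizontal\<close>)
  next
    case 4
    show ?thesis
      unfolding v by (rule step[OF rtranclp.rtrancl_refl]) (use 4 in \<open>auto simp: comb_def grid_adj_Pair\<close>)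
  next
    case (5 i)
    then have "?reach (to_nat (s, y)) ?root" using rail[of "i + 2"] teeth by simp
    then show ?thesis
      unfolding v by (rule step) (use 5 teeth in \<open>auto simp: comb_def horizontal\<close>)
  qed (use v rail in \<open>auto intro: rtranclp.rtrancl_refl\<close>)
qed

definition comb_core :: "int \<Rightarrow> point set" where
  "comb_core s = {(0, 0), (0, 1), (s, 0), (s, 1)}"

lemma shared_pts_neighbours:
  assumes "t \<in> shared_pts" "grid_adj t q"
  shows "q \<in> {(1, 0), (-1, 0), (0, -1), (0, 0), (1, 1), (-1, 1), (0, 1), (0, 2)}"
proof -
  obtain a b where q: "q = (a, b)" by fastforce
  have "q - t \<in> grid_dirs" using assms(2) by (simp add: grid_adj_iff)
  then have "q - t = (1, 0) \<or> q - t = (-1, 0) \<or> q - t = (0, 1) \<or> q - t = (0, -1)"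
    by (simp add: grid_dirs_def)
  moreover have "t = (0, 0) \<or> t = (0, 1)" using assms(1) by (simp add: shared_pts_def)
  ultimately show ?thesis unfolding q by (elim disjE) simp_all
qed

lemma comb_closed_nbhd_shared_pts:
  assumes s: "s \<in> {-1, 1}" and M: "1 \<le> M" and X: "0 \<notin> X"
  shows "{q \<in> comb s M X. q \<in> shared_pts \<or> (\<exists>t\<in>shared_pts. grid_adj t q)} = comb_core s"
proof (intro equalityI subsetI)
  fix q
  assume "q \<in> {q \<in> comb s M X. q \<in> shared_pts \<or> (\<exists>t\<in>shared_pts. grid_adj t q)}"
  then have q: "q \<in> comb s M X" and "q \<in> shared_pts \<or> (\<exists>t\<in>shared_pts. grid_adj t q)"
    by auto
  from this(2) have "q \<in> {(1, 0), (-1, 0), (0, -1), (0, 0), (1, 1), (-1, 1), (0, 1), (0, 2)}"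
  proof
    assume "\<exists>t\<in>shared_pts. grid_adj t q"
    then show ?thesis using shared_pts_neighbours by blast
  qed (auto simp: shared_pts_def)
  then show "q \<in> comb_core s"
    by (elim insertE emptyE) (use s X q in \<open>auto simp: comb_def comb_core_def\<close>)+
next
  fix q
  assume "q \<in> comb_core s"
  then show "q \<in> {q \<in> comb s M X. q \<in> shared_pts \<or> (\<exists>t\<in>shared_pts. grid_adj t q)}"
    unfolding comb_core_def
    by (elim insertE emptyE) (use s M in \<open>auto simp: comb_def shared_pts_def grid_adj_Pair\<close>)+
qed

lemma comb_core_subset_comb: "s \<in> {-1, 1} \<Longrightarrow> 1 \<le> M \<Longrightarrow> comb_core s \<subseteq> comb s M X"
  by (auto simp: comb_def comb_core_def)

lemma card_comb_core: "card (comb_core s) \<le> 4"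
proof -
  have "comb_core s = set [(0, 0), (0, 1), (s, 0), (s, 1)]" by (simp add: comb_core_def)
  then show ?thesis using card_length[of "[(0, 0), (0, 1), (s, 0), (s, 1)]"] by (simp add: eval_nat_numeral)
qed

abbreviation comb_glue :: "nat \<Rightarrow> nat set \<Rightarrow> nat set \<Rightarrow> (nat + nat) graph" where
  "comb_glue M A B \<equiv> glue (to_nat ` shared_pts) (grid_graph (comb (-1) M A)) (grid_graph (comb 1 M B))"

lemma induced_closed_nbhd_grid_graph_comb:
  assumes "s \<in> {-1, 1}" "1 \<le> M" "0 \<notin> X"
  shows "induced (grid_graph (comb s M X)) (closed_nbhd (grid_graph (comb s M X)) (to_nat ` shared_pts))
    = grid_graph (comb_core s)"
proof -
  have "closed_nbhd (grid_graph (comb s M X)) (to_nat ` shared_pts) = to_nat ` comb_core s"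
    using closed_nbhd_grid_graph[OF shared_pts_subset_comb] comb_closed_nbhd_shared_pts[OF assms]
    by simp
  then show ?thesis
    using comb_core_subset_comb[OF assms(1,2)] by (simp add: induced_grid_graph Int_absorb1)
qed

lemma induced_closed_nbhd_comb_glue:
  assumes "1 \<le> M" "finite A" "finite B" "0 \<notin> A" "0 \<notin> B"
  shows "induced (comb_glue M A B) (closed_nbhd (comb_glue M A B) (Inl ` to_nat ` shared_pts)) =
    glue (to_nat ` shared_pts) (grid_graph (comb_core (-1))) (grid_graph (comb_core 1))"
proof -
  have shared: "to_nat ` shared_pts \<inter> verts (grid_graph (comb s M X)) = to_nat ` shared_pts" for s X
    by (rule Int_absorb2[OF shared_in_verts_grid_graph_comb])
  have "induced (comb_glue M A B) (closed_nbhd (comb_glue M A B) (Inl ` to_nat ` shared_pts)) =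
      glue (to_nat ` shared_pts)
        (induced (grid_graph (comb (-1) M A)) (closed_nbhd (grid_graph (comb (-1) M A)) (to_nat ` shared_pts)))
        (induced (grid_graph (comb 1 M B)) (closed_nbhd (grid_graph (comb 1 M B)) (to_nat ` shared_pts)))"
    by (rule induced_closed_nbhd_glue) (simp_all only: wf_grid_graph finite_comb assms shared)
  also have "\<dots> = glue (to_nat ` shared_pts) (grid_graph (comb_core (-1))) (grid_graph (comb_core 1))"
    using assms by (simp add: induced_closed_nbhd_grid_graph_comb)
  finally show ?thesis .
qed

lemma connected_comb_glue:
  assumes "\<forall>i\<in>A. i + 2 \<le> M" "\<forall>i\<in>B. i + 2 \<le> M"
  shows "connected_graph (comb_glue M A B)"
proof (rule connected_graph_glue)
  show "connected_graph (grid_graph (comb (-1) M A))" "connected_graph (grid_graph (comb 1 M B))"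
    using assms by (simp_all add: connected_grid_graph_comb)
  show "to_nat ((0, 0) :: point) \<in> to_nat ` shared_pts" by (simp add: shared_pts_def)
  then show "to_nat ((0, 0) :: point) \<in> verts (grid_graph (comb (-1) M A))"
    "to_nat ((0, 0) :: point) \<in> verts (grid_graph (comb 1 M B))"
    using shared_in_verts_grid_graph_comb by blast+
qed

lemma card_verts_comb_glue_le:
  assumes "finite A" "finite B"
  shows "card (verts (comb_glue M A B)) \<le> 4 * M + 8 + card A + card B"
proof -
  have "card (verts (comb_glue M A B)) + card (to_nat ` shared_pts) \<le>
      card (verts (grid_graph (comb (-1) M A))) + card (verts (grid_graph (comb 1 M B)))"
    by (rule card_verts_glue_le)
      (simp_all add: assms finite_comb verts_grid_graph image_mono shared_pts_subset_comb)
  then have "card (verts (comb_glue M A B)) \<le> card (comb (-1) M A) + card (comb 1 M B)"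
    by (simp add: card_verts_grid_graph)
  also have "\<dots> \<le> 4 * M + 8 + card A + card B"
    using card_comb_le[OF assms(1), of "-1" M] card_comb_le[OF assms(2), of 1 M] by simp
  finally show ?thesis .
qed

lemma card_closed_nbhd_comb_glue_le:
  assumes "1 \<le> M" "finite A" "finite B" "0 \<notin> A" "0 \<notin> B"
  shows "card (closed_nbhd (comb_glue M A B) (Inl ` to_nat ` shared_pts)) \<le> 6"
proof -
  let ?S = "to_nat ` shared_pts"
  have "closed_nbhd (comb_glue M A B) (Inl ` ?S) =
      verts (induced (comb_glue M A B) (closed_nbhd (comb_glue M A B) (Inl ` ?S)))"
    using closed_nbhd_subset_verts[of "comb_glue M A B" "Inl ` ?S"] by (auto simp: induced_def)
  also have "\<dots> = verts (glue ?S (grid_graph (comb_core (-1))) (grid_graph (comb_core 1)))"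
    using assms by (simp add: induced_closed_nbhd_comb_glue)
  finally have "card (closed_nbhd (comb_glue M A B) (Inl ` ?S)) + card ?S \<le>
      card (comb_core (-1)) + card (comb_core 1)"
    using card_verts_glue_le[of "grid_graph (comb_core (-1))" "grid_graph (comb_core 1)" ?S]
    by (simp add: card_verts_grid_graph verts_grid_graph comb_core_def shared_pts_def)
  moreover have "card ?S = 2" by (simp add: shared_pts_def)
  ultimately show ?thesis using card_comb_core[of "-1"] card_comb_core[of 1] by linarith
qed

lemma comb_Int_comb_subset: "A \<inter> B = {} \<Longrightarrow> comb (-1) M A \<inter> comb 1 M B \<subseteq> shared_pts"
  by (auto simp: comb_def shared_pts_def)

lemma grid_subgraph_comb_glue_iff:
  assumes "finite A" "finite B" "\<forall>i\<in>A. i + 3 \<le> M"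
  shows "grid_subgraph (comb_glue M A B) \<longleftrightarrow> A \<inter> B = {}"
proof
  assume "grid_subgraph (comb_glue M A B)"
  then obtain F G where "grid_embedding_pair shared_pts (comb (-1) M A) (comb 1 M B) F G"
    by (rule grid_subgraph_glue_grid_graphsD)
  then show "A \<inter> B = {}"
    using comb_pair_not_grid_embeddable assms(3) by blast
next
  assume "A \<inter> B = {}"
  then show "grid_subgraph (comb_glue M A B)"
    using assms(1,2) by (intro grid_subgraph_glue_grid_graphs finite_comb comb_Int_comb_subset)
qed

lemma disjointness_expressingI:
  fixes S :: "nat \<Rightarrow> nat set" and L R :: "nat \<Rightarrow> nat set \<Rightarrow> nat graph"
  assumes "0 < \<alpha>"
    and "\<And>N. finite (S N)"
    and "\<And>N X. 1 \<le> N \<Longrightarrow> X \<subseteq> {1..N} \<Longrightarrow>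
      wf_graph (L N X) \<and> wf_graph (R N X) \<and> S N \<subseteq> verts (L N X) \<and> S N \<subseteq> verts (R N X)"
    and "\<And>N A B. 1 \<le> N \<Longrightarrow> A \<subseteq> {1..N} \<Longrightarrow> B \<subseteq> {1..N} \<Longrightarrow>
      connected_graph (glue (S N) (L N A) (R N B))"
    and "\<And>N A B. 1 \<le> N \<Longrightarrow> A \<subseteq> {1..N} \<Longrightarrow> B \<subseteq> {1..N} \<Longrightarrow>
      real (card (verts (glue (S N) (L N A) (R N B)))) \<le> \<alpha> * real N powr (1 / real \<kappa>)"
    and "\<And>N A B. 1 \<le> N \<Longrightarrow> A \<subseteq> {1..N} \<Longrightarrow> B \<subseteq> {1..N} \<Longrightarrow>
      card (closed_nbhd (glue (S N) (L N A) (R N B)) (Inl ` S N)) \<le> s"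
    and "\<And>N A B. 1 \<le> N \<Longrightarrow> A \<subseteq> {1..N} \<Longrightarrow> B \<subseteq> {1..N} \<Longrightarrow>
      C (glue (S N) (L N A) (R N B)) \<longleftrightarrow> A \<inter> B = {}"
    and "\<And>N A B A' B'. 1 \<le> N \<Longrightarrow> A \<subseteq> {1..N} \<Longrightarrow> B \<subseteq> {1..N} \<Longrightarrow>
      A' \<subseteq> {1..N} \<Longrightarrow> B' \<subseteq> {1..N} \<Longrightarrow>
      iso_fixing (Inl ` S N)
        (induced (glue (S N) (L N A) (R N B)) (closed_nbhd (glue (S N) (L N A) (R N B)) (Inl ` S N)))
        (induced (glue (S N) (L N A') (R N B')) (closed_nbhd (glue (S N) (L N A') (R N B')) (Inl ` S N)))"
  shows "disjointness_expressing C s \<kappa>"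
  unfolding disjointness_expressing_def
  apply (intro exI[of _ \<alpha>] conjI allI impI)
   apply (rule assms(1))
  subgoal for N
    using assms by (intro exI[of _ "S N"] exI[of _ "L N"] exI[of _ "R N"] conjI allI impI) simp_all
  done

lemma subset_atLeastAtMost_oneD:
  fixes A :: "nat set"
  assumes "A \<subseteq> {1..N}"
  shows "finite A" "0 \<notin> A" "\<forall>i\<in>A. i \<le> N"
  using assms by (auto intro: finite_subset)

theorem theorem5p5:
  shows "disjointness_expressing grid_subgraph 6 1"
proof (rule disjointness_expressingI[where \<alpha> = 26 and S = "\<lambda>N. to_nat ` shared_pts"
      and L = "\<lambda>N X. grid_graph (comb (-1) (N + 3) X)" and R = "\<lambda>N X. grid_graph (comb 1 (N + 3) X)"])
  fix N :: nat and A B A' B' :: "nat set"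
  assume N: "1 \<le> N" and A: "A \<subseteq> {1..N}" and B: "B \<subseteq> {1..N}"
  \<comment> \<open>Rails of height \<open>N + 3\<close> leave a rail row above the highest tooth.\<close>
  note A_props = subset_atLeastAtMost_oneD[OF A] and B_props = subset_atLeastAtMost_oneD[OF B]
  show "wf_graph (grid_graph (comb (-1) (N + 3) A)) \<and> wf_graph (grid_graph (comb 1 (N + 3) A)) \<and>
      to_nat ` shared_pts \<subseteq> verts (grid_graph (comb (-1) (N + 3) A)) \<and>
      to_nat ` shared_pts \<subseteq> verts (grid_graph (comb 1 (N + 3) A))"
    using A_props by (simp add: wf_grid_graph finite_comb shared_in_verts_grid_graph_comb)
  show "connected_graph (comb_glue (N + 3) A B)"
    using A_props B_props by (intro connected_comb_glue) auto
  have "card (verts (comb_glue (N + 3) A B)) \<le> 26 * N"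
    using card_verts_comb_glue_le[OF A_props(1) B_props(1), of "N + 3"] card_mono[OF _ A] card_mono[OF _ B] N
    by simp
  then show "real (card (verts (comb_glue (N + 3) A B))) \<le> 26 * real N powr (1 / real 1)"
    by simp
  show "card (closed_nbhd (comb_glue (N + 3) A B) (Inl ` to_nat ` shared_pts)) \<le> 6"
    using A_props B_props by (simp add: card_closed_nbhd_comb_glue_le)
  show "grid_subgraph (comb_glue (N + 3) A B) \<longleftrightarrow> A \<inter> B = {}"
    using A_props B_props by (simp add: grid_subgraph_comb_glue_iff)
  assume "A' \<subseteq> {1..N}" "B' \<subseteq> {1..N}"
  note A'_props = subset_atLeastAtMost_oneD[OF this(1)] and B'_props = subset_atLeastAtMost_oneD[OF this(2)]
  show "iso_fixing (Inl ` to_nat ` shared_pts)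
    (induced (comb_glue (N + 3) A B) (closed_nbhd (comb_glue (N + 3) A B) (Inl ` to_nat ` shared_pts)))
    (induced (comb_glue (N + 3) A' B') (closed_nbhd (comb_glue (N + 3) A' B') (Inl ` to_nat ` shared_pts)))"
    using A_props B_props A'_props B'_props by (simp add: induced_closed_nbhd_comb_glue iso_fixing_refl)
qed (simp_all add: shared_pts_def)

end
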